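(* Let $\mathcal F\subseteq\mathcal F_0$ be finite and $r_1=\max\{1,r(\mathcal F)\}$. Let $G$ be a finite graph of maximum degree $\Delta$, $\pi\colon V(G)\to\mathcal F$, and $\mathbf z\in\mathbb C^{\kappa+1}$ with $z_0\neq0$ and $|z_i|/|z_0|\le\big(\Delta\kappa e^2r_1(r_1+1)\big)^{-1}$ for $1\le i\le\kappa$. Then $Z_{\mathcal F}(G,\pi,\mathbf z)\neq0$, and, writing $P(t)=Z_{\mathcal F}(G,\pi,(z_0,tz_1,\dots,tz_\kappa))/\big(z_0^{|E(G)|}\prod_{v}f_v(\mathbf0)\big)$ (a polynomial in $t$ with $P(0)=1$), the Taylor series of $\log P(t)$ about $t=0$ converges absolutely at $t=1$.
   Context: $D=\{0,\dots,\kappa\}$; signatures $f\colon D^d\to\mathbb C$; $\mathcal F_0=\{f\mid f(\mathbf0)\neq0\}$; $r(f)=\max_{x\in D^d\setminus\{\mathbf0\}}|f(x)|/|f(\mathbf0)|$, $r(\mathcal F)=\max_{f\in\mathcal F}r(f)$. $G=(V,E)$ with fixed order on $E$, $E(v)$ the edges at $v$, $\pi$ assigns $f_v$ of arity $|E(v)|$, $Z_{\mathcal F}(G,\pi,\mathbf z)=\sum_{\sigma\in D^E}\prod_vf_v(\sigma|_{E(v)})\prod_{i=0}^\kappa z_i^{|\sigma|_i}$ with $|\sigma|_i=|\{e:\sigma(e)=i\}|$. *)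

theory Defs
  imports "HOL-Analysis.Analysis"
begin

text \<open>A signature of arity d over D = {0..kappa} is a pair (d, f) where f is read on
  lists of length d with entries in D.\<close>
type_synonym sig = "nat \<times> (nat list \<Rightarrow> complex)"

definition sig_dom :: "nat \<Rightarrow> nat \<Rightarrow> nat list set" where
  "sig_dom \<kappa> d = {xs. length xs = d \<and> set xs \<subseteq> {0..\<kappa>}}"

definition zero_val :: "sig \<Rightarrow> complex" where
  "zero_val f = snd f (replicate (fst f) 0)"

definition in_F0 :: "sig \<Rightarrow> bool" where
  "in_F0 f \<longleftrightarrow> zero_val f \<noteq> 0"

text \<open>r(f); the max over an empty set (arity 0) is taken to be 0, which is harmless
  since only max{1, r(F)} is used.\<close>
definition ratio_r :: "nat \<Rightarrow> sig \<Rightarrow> real" where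
  "ratio_r \<kappa> f = Max (insert 0 ((\<lambda>x. cmod (snd f x) / cmod (zero_val f)) `
       (sig_dom \<kappa> (fst f) - {replicate (fst f) 0})))"

definition ratio_rF :: "nat \<Rightarrow> sig set \<Rightarrow> real" where
  "ratio_rF \<kappa> F = Max (insert 0 (ratio_r \<kappa> ` F))"

text \<open>Graph: finite vertex set V, edges given as a distinct list es (the fixed order on E),
  each edge having a two-element set of endpoints in V (multi-edges allowed).\<close>
definition is_graph :: "'v set \<Rightarrow> ('e \<Rightarrow> 'v set) \<Rightarrow> 'e list \<Rightarrow> bool" where
  "is_graph V ends es \<longleftrightarrow> finite V \<and> distinct es \<and> (\<forall>e\<in>set es. ends e \<subseteq> V \<and> card (ends e) = 2)"

definition inc_edges :: "('e \<Rightarrow> 'v set) \<Rightarrow> 'e list \<Rightarrow> 'v \<Rightarrow> 'e list" where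
  "inc_edges ends es v = filter (\<lambda>e. v \<in> ends e) es"

definition max_degree :: "'v set \<Rightarrow> ('e \<Rightarrow> 'v set) \<Rightarrow> 'e list \<Rightarrow> nat" where
  "max_degree V ends es = Max (insert 0 ((\<lambda>v. length (inc_edges ends es v)) ` V))"

definition partition_fn ::
  "nat \<Rightarrow> 'v set \<Rightarrow> ('e \<Rightarrow> 'v set) \<Rightarrow> 'e list \<Rightarrow> ('v \<Rightarrow> sig) \<Rightarrow> (nat \<Rightarrow> complex) \<Rightarrow> complex" where
  "partition_fn \<kappa> V ends es \<pi> z =
     (\<Sum>\<sigma>\<in>PiE (set es) (\<lambda>_. {0..\<kappa>}).
        (\<Prod>v\<in>V. snd (\<pi> v) (map \<sigma> (inc_edges ends es v))) *
        (\<Prod>i=0..\<kappa>. z i ^ card {e\<in>set es. \<sigma> e = i}))"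

definition poly_P ::
  "nat \<Rightarrow> 'v set \<Rightarrow> ('e \<Rightarrow> 'v set) \<Rightarrow> 'e list \<Rightarrow> ('v \<Rightarrow> sig) \<Rightarrow> (nat \<Rightarrow> complex) \<Rightarrow> complex \<Rightarrow> complex" where
  "poly_P \<kappa> V ends es \<pi> z t =
     partition_fn \<kappa> V ends es \<pi> (\<lambda>i. if i = 0 then z 0 else t * z i) /
     (z 0 ^ length es * (\<Prod>v\<in>V. zero_val (\<pi> v)))"

end

theory Submission
  imports Defs "HOL-Complex_Analysis.Complex_Analysis"
begin

text \<open>Dividing by \<open>z\<^sub>0\<^bsup>|E|\<^esup>\<Prod>\<^sub>v f\<^sub>v(0)\<close> turns \<open>P(t)\<close> into a polymer partition function:
  a spin configuration is determined by the set of edges carrying non-zero spins, and its weight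
  factorises over the connected components of that set, edges being adjacent when they share a
  vertex. A connected set of \<open>k\<close> edges touches at most \<open>k + 1\<close> vertices, so its weight is at
  most \<open>r\<^sub>1\<^bsup>k+1\<^esup>\<beta>\<^bsup>k\<^esup>\<close> with \<open>\<beta> = \<Sum>\<^sub>i |t z\<^sub>i/z\<^sub>0|\<close>, and its neighbourhood has fewer than
  \<open>\<Delta>(k + 1)\<close> edges. Comparing with the probability that a fixed edge lies in a random
  \<open>p\<close>-subset of edges, the hypothesis gives Dobrushin's condition for \<open>|t| \<le> 1.01\<close>, so
  \<open>P\<close> has no zeros there. Then \<open>log P\<close> is holomorphic on a disc of radius \<open>> 1\<close>, and its
  Taylor coefficients decay geometrically.\<close>

section \<open>Connected sets for a reflexive adjacency relation\<close>

definition adj_rel :: "('a \<Rightarrow> 'a \<Rightarrow> bool) \<Rightarrow> 'a set \<Rightarrow> ('a \<times> 'a) set" where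
  "adj_rel ad X = {(g, f). g \<in> X \<and> f \<in> X \<and> ad g f}"

definition component :: "('a \<Rightarrow> 'a \<Rightarrow> bool) \<Rightarrow> 'a set \<Rightarrow> 'a \<Rightarrow> 'a set" where
  "component ad X e = {f. (e, f) \<in> (adj_rel ad X)\<^sup>*}"

definition connected_at :: "('a \<Rightarrow> 'a \<Rightarrow> bool) \<Rightarrow> 'a set \<Rightarrow> 'a \<Rightarrow> bool" where
  "connected_at ad g e \<longleftrightarrow> e \<in> g \<and> component ad g e = g"

definition nbhd :: "('a \<Rightarrow> 'a \<Rightarrow> bool) \<Rightarrow> 'a set \<Rightarrow> 'a set \<Rightarrow> 'a set" where
  "nbhd ad A g = {f \<in> A. \<exists>h\<in>g. ad h f}"

lemma self_in_component: "e \<in> component ad X e"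
  by (simp add: component_def)

lemma component_subset: "e \<in> X \<Longrightarrow> component ad X e \<subseteq> X"
proof
  fix f assume "e \<in> X" "f \<in> component ad X e"
  from this(2) have "(e, f) \<in> (adj_rel ad X)\<^sup>*" by (simp add: component_def)
  then show "f \<in> X" using \<open>e \<in> X\<close> by induction (auto simp: adj_rel_def)
qed

lemma component_mono: "X \<subseteq> Y \<Longrightarrow> component ad X e \<subseteq> component ad Y e"
proof -
  assume "X \<subseteq> Y"
  then have "adj_rel ad X \<subseteq> adj_rel ad Y" by (auto simp: adj_rel_def)
  then show ?thesis unfolding component_def using rtrancl_mono by blast
qed

lemma component_closed:
  "g \<in> component ad X e \<Longrightarrow> g \<in> X \<Longrightarrow> f \<in> X \<Longrightarrow> ad g f \<Longrightarrow> f \<in> component ad X e"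
  unfolding component_def by (auto simp: adj_rel_def intro: rtrancl_into_rtrancl)

lemma connected_at_component:
  assumes "e \<in> X" shows "connected_at ad (component ad X e) e"
proof -
  let ?C = "component ad X e"
  have "?C \<subseteq> component ad ?C e"
  proof
    fix f assume "f \<in> ?C"
    then have "(e, f) \<in> (adj_rel ad X)\<^sup>*" by (simp add: component_def)
    then show "f \<in> component ad ?C e"
    proof (induction rule: rtrancl_induct)
      case base
      show ?case by (rule self_in_component)
    next
      case (step g f)
      then have "g \<in> ?C" "f \<in> ?C" by (auto simp: component_def)
      with step show ?case by (auto simp: adj_rel_def intro: component_closed)
    qed
  qed
  with component_mono[OF component_subset[OF assms]] show ?thesis
    by (auto simp: connected_at_def self_in_component)
qed

lemma not_adj_outside_component:
  assumes "e \<in> X" "f \<in> X - component ad X e" "g \<in> component ad X e"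
  shows "\<not> ad g f"
  using assms component_closed[of g ad X e f] component_subset[OF assms(1)] by blast

lemma component_Un_outside_nbhd:
  assumes g: "connected_at ad g e" and Y: "Y \<subseteq> A - nbhd ad A g"
  shows "component ad (g \<union> Y) e = g"
proof
  show "g \<subseteq> component ad (g \<union> Y) e"
    using g component_mono[of g "g \<union> Y" ad e] by (auto simp: connected_at_def)
next
  show "component ad (g \<union> Y) e \<subseteq> g"
  proof
    fix f assume "f \<in> component ad (g \<union> Y) e"
    then have "(e, f) \<in> (adj_rel ad (g \<union> Y))\<^sup>*" by (simp add: component_def)
    then show "f \<in> g"
    proof (induction rule: rtrancl_induct)
      case base
      show ?case using g by (simp add: connected_at_def)
    next
      case (step h f)
      then show ?case using Y by (auto simp: adj_rel_def nbhd_def)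
    qed
  qed
qed

lemma connected_at_escape:
  assumes g: "connected_at ad g e" and S: "e \<in> S" "S \<subset> g"
  obtains f h where "f \<in> g - S" "h \<in> S" "ad h f"
proof -
  have "\<exists>f\<in>g - S. \<exists>h\<in>S. ad h f"
  proof (rule ccontr)
    assume none: "\<not> ?thesis"
    have "component ad g e \<subseteq> S"
    proof
      fix f assume "f \<in> component ad g e"
      then have "(e, f) \<in> (adj_rel ad g)\<^sup>*" by (simp add: component_def)
      then show "f \<in> S" using S(1) none by induction (auto simp: adj_rel_def)
    qed
    then show False using g S(2) by (auto simp: connected_at_def)
  qed
  then show thesis using that by blast
qed

lemma subset_nbhd: "\<forall>x\<in>A. ad x x \<Longrightarrow> g \<subseteq> A \<Longrightarrow> g \<subseteq> nbhd ad A g"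
  by (auto simp: nbhd_def)

text \<open>Every set containing \<open>e\<close> splits uniquely into the component \<open>g\<close> of \<open>e\<close> and a set
  avoiding the neighbourhood of \<open>g\<close>.\<close>

lemma sum_subsets_containing_by_component:
  assumes A: "finite A" "e \<in> A" and reflexive: "\<forall>x\<in>A. ad x x"
  shows "(\<Sum>X | X \<subseteq> A \<and> e \<in> X. F X) =
         (\<Sum>g | g \<subseteq> A \<and> connected_at ad g e. \<Sum>Y\<in>Pow (A - nbhd ad A g). F (g \<union> Y))"
proof -
  let ?G = "{g. g \<subseteq> A \<and> connected_at ad g e}"
  have "finite ?G" using A(1) by (auto intro: finite_subset[of _ "Pow A"])
  then have "(\<Sum>g\<in>?G. \<Sum>Y\<in>Pow (A - nbhd ad A g). F (g \<union> Y)) =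
        (\<Sum>p\<in>Sigma ?G (\<lambda>g. Pow (A - nbhd ad A g)). F (fst p \<union> snd p))"
    using A(1) by (subst sum.Sigma) (auto simp: split_beta)
  also have "\<dots> = (\<Sum>X | X \<subseteq> A \<and> e \<in> X. F X)"
  proof (rule sum.reindex_bij_witness[where i = "\<lambda>X. (component ad X e, X - component ad X e)"
        and j = "\<lambda>p. fst p \<union> snd p"])
    fix X assume X: "X \<in> {X. X \<subseteq> A \<and> e \<in> X}"
    then show "fst (component ad X e, X - component ad X e) \<union>
               snd (component ad X e, X - component ad X e) = X"
      using component_subset[of e X ad] by auto
    have "X - component ad X e \<subseteq> A - nbhd ad A (component ad X e)"
      using X not_adj_outside_component[of e X _ ad] by (auto simp: nbhd_def)
    with X show "(component ad X e, X - component ad X e) \<in> Sigma ?G (\<lambda>g. Pow (A - nbhd ad A g))"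
      using component_subset[of e X ad] connected_at_component[of e X ad] by auto
  next
    fix p assume p: "p \<in> Sigma ?G (\<lambda>g. Pow (A - nbhd ad A g))"
    then obtain g Y where p_eq: "p = (g, Y)" and g: "g \<subseteq> A" "connected_at ad g e"
      and Y: "Y \<subseteq> A - nbhd ad A g" by auto
    have "g \<subseteq> nbhd ad A g" using subset_nbhd[of A ad g, OF reflexive g(1)] .
    with p_eq Y component_Un_outside_nbhd[OF g(2) Y]
    show "(component ad (fst p \<union> snd p) e, fst p \<union> snd p - component ad (fst p \<union> snd p) e) = p"
      by auto
    show "fst p \<union> snd p \<in> {X. X \<subseteq> A \<and> e \<in> X}"
      using p_eq g Y by (auto simp: connected_at_def)
  qed simp
  finally show ?thesis by simp
qed

section \<open>Sums over subsets and Dobrushin's criterion\<close>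

definition subset_sum :: "('a set \<Rightarrow> 'b::comm_monoid_add) \<Rightarrow> 'a set \<Rightarrow> 'b" where
  "subset_sum \<Phi> A = (\<Sum>X\<in>Pow A. \<Phi> X)"

lemma subset_sum_recursion:
  fixes \<Phi> :: "'a set \<Rightarrow> 'b::comm_semiring_1"
  assumes A: "finite A" "e \<in> A" and reflexive: "\<forall>x\<in>A. ad x x"
    and mult: "\<And>g Y. g \<subseteq> A \<Longrightarrow> connected_at ad g e \<Longrightarrow> Y \<subseteq> A - nbhd ad A g \<Longrightarrow>
                 \<Phi> (g \<union> Y) = \<Phi> g * \<Phi> Y"
  shows "subset_sum \<Phi> A = subset_sum \<Phi> (A - {e}) +
    (\<Sum>g | g \<subseteq> A \<and> connected_at ad g e. \<Phi> g * subset_sum \<Phi> (A - nbhd ad A g))"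
proof -
  have "Pow A = Pow (A - {e}) \<union> {X. X \<subseteq> A \<and> e \<in> X}" by auto
  then have "subset_sum \<Phi> A = subset_sum \<Phi> (A - {e}) + (\<Sum>X | X \<subseteq> A \<and> e \<in> X. \<Phi> X)"
    unfolding subset_sum_def using A by (subst sum.union_disjoint[symmetric]) auto
  also have "(\<Sum>X | X \<subseteq> A \<and> e \<in> X. \<Phi> X) =
      (\<Sum>g | g \<subseteq> A \<and> connected_at ad g e. \<Sum>Y\<in>Pow (A - nbhd ad A g). \<Phi> (g \<union> Y))"
    by (rule sum_subsets_containing_by_component[of A e ad, OF A reflexive])
  also have "\<dots> = (\<Sum>g | g \<subseteq> A \<and> connected_at ad g e. \<Phi> g * subset_sum \<Phi> (A - nbhd ad A g))"
    unfolding subset_sum_def sum_distrib_left by (intro sum.cong refl) (auto intro: mult)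
  finally show ?thesis .
qed

lemma ratio_bound_iterate:
  fixes Z :: "'a set \<Rightarrow> 'b::real_normed_vector"
  assumes "finite D" "D \<subseteq> B" "0 \<le> c"
    and step: "\<And>C f. C \<subseteq> B \<Longrightarrow> f \<in> C \<Longrightarrow> c * norm (Z (C - {f})) \<le> norm (Z C)"
  shows "c ^ card D * norm (Z (B - D)) \<le> norm (Z B)"
  using assms(1,2)
proof (induction D rule: finite_induct)
  case (insert f D)
  have "B - insert f D = (B - D) - {f}" by blast
  then have "c ^ card (insert f D) * norm (Z (B - insert f D))
        = c ^ card D * (c * norm (Z ((B - D) - {f})))"
    using insert(1,2) by simp
  also have "\<dots> \<le> c ^ card D * norm (Z (B - D))"
    using insert(2,4) \<open>0 \<le> c\<close> by (intro mult_left_mono step) auto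
  also have "\<dots> \<le> norm (Z B)" using insert by blast
  finally show ?case .
qed simp

text \<open>In \<open>Z(A) = Z(A - {e}) + \<Sum>\<^sub>g \<Phi>(g) Z(A - N(g))\<close> each \<open>Z(A - N(g))\<close> is compared with
  \<open>Z(A - {e})\<close> by removing the elements of \<open>N(g) - {e}\<close> one at a time.\<close>

lemma subset_sum_ratio_step:
  fixes \<Phi> :: "'a set \<Rightarrow> complex"
  assumes A: "finite A" "e \<in> A" and reflexive: "\<forall>x\<in>A. ad x x"
    and mult: "\<And>g Y. g \<subseteq> A \<Longrightarrow> connected_at ad g e \<Longrightarrow> Y \<subseteq> A - nbhd ad A g \<Longrightarrow>
                 \<Phi> (g \<union> Y) = \<Phi> g * \<Phi> Y"
    and q: "q < 1"
    and key: "(\<Sum>g | g \<subseteq> A \<and> connected_at ad g e. cmod (\<Phi> g) / (1 - q) ^ (card (nbhd ad A g) - 1)) \<le> q"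
    and smaller: "\<And>C f. C \<subseteq> A - {e} \<Longrightarrow> f \<in> C \<Longrightarrow>
                   (1 - q) * cmod (subset_sum \<Phi> (C - {f})) \<le> cmod (subset_sum \<Phi> C)"
  shows "(1 - q) * cmod (subset_sum \<Phi> (A - {e})) \<le> cmod (subset_sum \<Phi> A)"
proof -
  let ?Z = "subset_sum \<Phi>" and ?G = "{g. g \<subseteq> A \<and> connected_at ad g e}"
  have "?Z A = ?Z (A - {e}) + (\<Sum>g\<in>?G. \<Phi> g * ?Z (A - nbhd ad A g))"
    by (rule subset_sum_recursion[of A e ad, OF A reflexive mult])
  then have lower: "cmod (?Z (A - {e})) \<le> cmod (?Z A) + cmod (\<Sum>g\<in>?G. \<Phi> g * ?Z (A - nbhd ad A g))"
    using norm_triangle_ineq4[of "?Z A" "\<Sum>g\<in>?G. \<Phi> g * ?Z (A - nbhd ad A g)"] by simp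
  have bound: "cmod (\<Phi> g * ?Z (A - nbhd ad A g))
              \<le> cmod (\<Phi> g) / (1 - q) ^ (card (nbhd ad A g) - 1) * cmod (?Z (A - {e}))"
    if g: "g \<in> ?G" for g
  proof -
    define D where "D = nbhd ad A g - {e}"
    have "e \<in> nbhd ad A g" using g A(2) reflexive by (auto simp: nbhd_def connected_at_def)
    moreover have "finite (nbhd ad A g)" using A(1) by (simp add: nbhd_def)
    ultimately have D: "card D = card (nbhd ad A g) - 1" "A - nbhd ad A g = (A - {e}) - D"
      unfolding D_def by auto
    have "(1 - q) ^ card D * cmod (?Z ((A - {e}) - D)) \<le> cmod (?Z (A - {e}))"
      by (rule ratio_bound_iterate[OF _ _ _ smaller]) (use A(1) q in \<open>auto simp: D_def nbhd_def\<close>)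
    moreover have "0 < (1 - q) ^ card D" using q by simp
    ultimately have "cmod (?Z (A - nbhd ad A g)) \<le> cmod (?Z (A - {e})) / (1 - q) ^ card D"
      by (simp add: D(2) field_simps)
    then have "cmod (\<Phi> g) * cmod (?Z (A - nbhd ad A g)) \<le>
        cmod (\<Phi> g) * (cmod (?Z (A - {e})) / (1 - q) ^ card D)"
      by (rule mult_left_mono) simp
    then show ?thesis by (simp add: norm_mult D(1))
  qed
  have "cmod (\<Sum>g\<in>?G. \<Phi> g * ?Z (A - nbhd ad A g))
        \<le> (\<Sum>g\<in>?G. cmod (\<Phi> g) / (1 - q) ^ (card (nbhd ad A g) - 1) * cmod (?Z (A - {e})))"
    by (rule order_trans[OF norm_sum sum_mono]) (rule bound)
  also have "\<dots> \<le> q * cmod (?Z (A - {e}))"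
    unfolding sum_distrib_right[symmetric] by (rule mult_right_mono[OF key]) simp
  finally show ?thesis using lower by (simp add: left_diff_distrib)
qed

lemma dobrushin_criterion:
  fixes \<Phi> :: "'a set \<Rightarrow> complex"
  assumes E0: "finite E0" and reflexive: "\<forall>x\<in>E0. ad x x"
    and mult: "\<And>A e g Y. A \<subseteq> E0 \<Longrightarrow> e \<in> A \<Longrightarrow> g \<subseteq> A \<Longrightarrow> connected_at ad g e \<Longrightarrow>
                 Y \<subseteq> A - nbhd ad A g \<Longrightarrow> \<Phi> (g \<union> Y) = \<Phi> g * \<Phi> Y"
    and empty: "\<Phi> {} = 1" and q: "0 < q" "q < 1"
    and key: "\<And>A e. A \<subseteq> E0 \<Longrightarrow> e \<in> A \<Longrightarrow>
        (\<Sum>g | g \<subseteq> A \<and> connected_at ad g e. cmod (\<Phi> g) / (1 - q) ^ (card (nbhd ad A g) - 1)) \<le> q"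
    and "A \<subseteq> E0"
  shows "subset_sum \<Phi> A \<noteq> 0 \<and> (\<forall>e\<in>A. (1 - q) * cmod (subset_sum \<Phi> (A - {e})) \<le> cmod (subset_sum \<Phi> A))"
  using \<open>A \<subseteq> E0\<close>
proof (induction "card A" arbitrary: A rule: less_induct)
  case less
  let ?Z = "subset_sum \<Phi>"
  have fA: "finite A" using less.prems E0 finite_subset by blast
  have IH: "?Z B \<noteq> 0 \<and> (\<forall>e\<in>B. (1 - q) * cmod (?Z (B - {e})) \<le> cmod (?Z B))" if "B \<subset> A" for B
  proof -
    have "card B < card A" using that fA psubset_card_mono by blast
    moreover have "B \<subseteq> E0" using that less.prems by blast
    ultimately show ?thesis using less.hyps by blast
  qed
  have ratio: "(1 - q) * cmod (?Z (A - {e})) \<le> cmod (?Z A)" if e: "e \<in> A" for e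
  proof (rule subset_sum_ratio_step[OF fA e _ _ q(2) key[OF less.prems e]])
    show "\<forall>x\<in>A. ad x x" using reflexive less.prems by blast
    show "\<Phi> (g \<union> Y) = \<Phi> g * \<Phi> Y" if "g \<subseteq> A" "connected_at ad g e" "Y \<subseteq> A - nbhd ad A g" for g Y
      using mult[OF less.prems e that] .
    show "(1 - q) * cmod (?Z (C - {f})) \<le> cmod (?Z C)" if "C \<subseteq> A - {e}" "f \<in> C" for C f
      using IH[of C] that e by blast
  qed
  have "?Z A \<noteq> 0"
  proof (cases "A = {}")
    case True
    then show ?thesis by (simp add: subset_sum_def empty)
  next
    case False
    then obtain e where e: "e \<in> A" by blast
    then have "?Z (A - {e}) \<noteq> 0" using IH[of "A - {e}"] by blast
    then have "0 < (1 - q) * cmod (?Z (A - {e}))" using q by simp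
    then show ?thesis using ratio[OF e] by auto
  qed
  with ratio show ?case by blast
qed

lemma subset_sum_power:
  fixes x :: "'b::comm_semiring_1"
  assumes "finite A" shows "subset_sum (\<lambda>X. x ^ card X) A = (1 + x) ^ card A"
  using assms
proof (induction A rule: finite_induct)
  case empty
  then show ?case by (simp add: subset_sum_def)
next
  case (insert a A)
  have "inj_on (insert a) (Pow A)" using insert(2) by (auto simp: inj_on_def)
  moreover have "Pow A \<inter> insert a ` Pow A = {}" using insert(2) by auto
  moreover have "x ^ card (insert a X) = x * x ^ card X" if "X \<in> Pow A" for X
  proof -
    have "finite X" "a \<notin> X" using that insert(1,2) finite_subset by auto
    then show ?thesis by simp
  qed
  ultimately have "subset_sum (\<lambda>X. x ^ card X) (insert a A) =
      subset_sum (\<lambda>X. x ^ card X) A + x * subset_sum (\<lambda>X. x ^ card X) A"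
    using insert(1) unfolding subset_sum_def Pow_insert
    by (simp add: sum.union_disjoint sum.reindex sum_distrib_left)
  with insert show ?case by (simp add: algebra_simps)
qed

text \<open>This is the probability that \<open>e\<close> lies in a random subset of \<open>A\<close> containing each element
  independently with probability \<open>p\<close>, split according to the component of \<open>e\<close>.\<close>

lemma sum_connected_at_probability:
  fixes p :: real
  assumes A: "finite A" "e \<in> A" and reflexive: "\<forall>x\<in>A. ad x x" and p: "0 < p" "p < 1"
  shows "(\<Sum>g | g \<subseteq> A \<and> connected_at ad g e. p ^ card g * (1 - p) ^ (card (nbhd ad A g) - card g)) = p"
proof -
  define x where "x = p / (1 - p)"
  have scale: "x ^ k * (1 + x) ^ (N - n) * (1 - p) ^ N = p ^ k * (1 - p) ^ (n - k)"
    if "k \<le> n" "n \<le> N" for k n N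
  proof -
    have "N = (N - n) + (n - k) + k" using that by simp
    then have "(1 - p) ^ N = (1 - p) ^ (N - n) * (1 - p) ^ (n - k) * (1 - p) ^ k"
      by (metis power_add)
    moreover have "1 + x = 1 / (1 - p)" using p by (simp add: x_def field_simps)
    ultimately show ?thesis using p by (simp add: x_def power_divide field_simps)
  qed
  let ?G = "{g. g \<subseteq> A \<and> connected_at ad g e}"
  have nbhd: "g \<subseteq> nbhd ad A g" "nbhd ad A g \<subseteq> A" "finite (nbhd ad A g)" if "g \<subseteq> A" for g
    using subset_nbhd[of A ad g, OF reflexive that] A(1) by (auto simp: nbhd_def)
  have "x ^ card (g \<union> Y) = x ^ card g * x ^ card Y"
    if "g \<subseteq> A" "Y \<subseteq> A - nbhd ad A g" for g Y
  proof -
    have "g \<inter> Y = {}" using that nbhd(1)[of g] by blast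
    moreover have "finite g" "finite Y" using that A(1) finite_subset by blast+
    ultimately show ?thesis by (simp add: card_Un_disjoint power_add)
  qed
  then have "subset_sum (\<lambda>X. x ^ card X) A = subset_sum (\<lambda>X. x ^ card X) (A - {e}) +
      (\<Sum>g\<in>?G. x ^ card g * subset_sum (\<lambda>X. x ^ card X) (A - nbhd ad A g))"
    by (intro subset_sum_recursion[of A e ad, OF A reflexive])
  then have "(1 + x) ^ card A = (1 + x) ^ (card A - 1) +
      (\<Sum>g\<in>?G. x ^ card g * (1 + x) ^ (card A - card (nbhd ad A g)))"
    using A nbhd by (simp add: subset_sum_power card_Diff_subset)
  then have "(1 + x) ^ card A * (1 - p) ^ card A = (1 + x) ^ (card A - 1) * (1 - p) ^ card A +
      (\<Sum>g\<in>?G. x ^ card g * (1 + x) ^ (card A - card (nbhd ad A g)) * (1 - p) ^ card A)"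
    by (simp add: algebra_simps sum_distrib_left sum_distrib_right)
  also have "(\<Sum>g\<in>?G. x ^ card g * (1 + x) ^ (card A - card (nbhd ad A g)) * (1 - p) ^ card A)
       = (\<Sum>g\<in>?G. p ^ card g * (1 - p) ^ (card (nbhd ad A g) - card g))"
    using nbhd A(1) by (intro sum.cong refl scale) (auto intro!: card_mono)
  also have "(1 + x) ^ (card A - 1) * (1 - p) ^ card A = 1 - p"
    using scale[of 0 1 "card A"] A by (simp add: Suc_le_eq card_gt_0_iff) blast
  also have "(1 + x) ^ card A * (1 - p) ^ card A = 1"
    using scale[of 0 0 "card A"] by simp
  finally show ?thesis by simp
qed

section \<open>Numerical estimates\<close>

lemma quadratic_Taylor_power_le_exp:
  fixes x :: real assumes "0 \<le> x" "n > 0"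
  shows "(1 + x / n + (x / n)^2 / 2) ^ n \<le> exp x"
proof -
  have "exp x = exp (x / n) ^ n" using assms(2) by (simp flip: exp_of_nat_mult)
  moreover have "1 + x / n + (x / n)^2 / 2 \<le> exp (x / n)"
    by (rule exp_lower_Taylor_quadratic) (use assms in simp)
  ultimately show ?thesis using assms by (simp add: power_mono)
qed

lemma exp_lower_bound_numeral:
  fixes a c :: real
  assumes "0 \<le> a" "b \<le> c * (1 + a / 8 + (a / 8)^2 / 2) ^ 8" "0 \<le> c"
  shows "b \<le> c * exp a"
proof -
  have "(1 + a / 8 + (a / 8)^2 / 2) ^ 8 \<le> exp a"
    using quadratic_Taylor_power_le_exp[of a 8] assms(1) by simp
  then show ?thesis using assms by (meson mult_left_mono order_trans)
qed

lemma exp_neg_le_one_minus_div_pow: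
  fixes x :: real and D :: nat
  assumes "0 \<le> x" "x < 1" "1 \<le> D"
  shows "exp (- x) \<le> (1 - x / D) ^ (D - 1)"
proof -
  define y where "y = x / D"
  have y: "0 \<le> y" "y < 1" unfolding y_def using assms by (auto simp: field_simps)
  have "1 / (1 - y) \<le> exp (y / (1 - y))"
    using exp_ge_add_one_self[of "y / (1 - y)"] y by (simp add: field_simps)
  then have "exp (- (y / (1 - y))) \<le> 1 - y" using y by (simp add: exp_minus field_simps)
  then have "exp (- (y / (1 - y))) ^ (D - 1) \<le> (1 - y) ^ (D - 1)" by (rule power_mono) simp
  then have "exp (- (real (D - 1) * (y / (1 - y)))) \<le> (1 - y) ^ (D - 1)"
    by (simp add: exp_of_nat_mult[symmetric])
  moreover have "real (D - 1) * (y / (1 - y)) = (real D - 1) * x / (real D - x)"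
    using assms by (simp add: y_def of_nat_diff field_simps)
  moreover have "(real D - 1) * x / (real D - x) \<le> x"
    using assms mult_left_le_one_le[of x x] by (simp add: field_simps)
  ultimately show ?thesis unfolding y_def by (smt (verit) exp_le_cancel_iff)
qed

lemma exp_neg_le_Dobrushin_factors:
  fixes D :: nat assumes "1 \<le> D"
  shows "exp (- 45/100) \<le> (1 - 11/100 / D) ^ (D - 1) * (1 - 34/100 / D) ^ (D - 1)"
proof -
  have "exp (- 45/100 :: real) = exp (- (11/100)) * exp (- (34/100))" by (simp flip: exp_add)
  also have "\<dots> \<le> (1 - 11/100 / D) ^ (D - 1) * (1 - 34/100 / D) ^ (D - 1)"
    using assms by (intro mult_mono exp_neg_le_one_minus_div_pow) auto
  finally show ?thesis .
qed

text \<open>The numbers \<open>0.34\<close> and \<open>0.11\<close> are the choices \<open>q = 0.34/D\<close>, \<open>p = 0.11/D\<close> of the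
  Dobrushin and counting parameters; \<open>e^{-0.45}\<close> compensates for the factors
  \<open>(1 - p)\<^bsup>D-1\<^esup>(1 - q)\<^bsup>D-1\<^esup> \<ge> e^{-0.45}\<close>, and the hypothesis is the one of the theorem at
  \<open>|t| \<le> 1.01\<close>.\<close>

lemma polymer_numeric_bound:
  fixes r \<beta> D :: real and k :: nat
  assumes r: "1 \<le> r" and D: "0 < D" and k: "1 \<le> k" and \<beta>: "0 \<le> \<beta>"
    and hyp: "\<beta> * (D * exp 2 * r * (r + 1)) \<le> 101/100"
  shows "r ^ (k + 1) * \<beta> ^ k \<le> (34/100 / D) * (11/100 / D) ^ (k - 1) * exp (- 45/100) ^ (k + 1)"
proof -
  define E where "E = exp (- 45/100 :: real)"
  define u where "u = r * \<beta> * D"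
  have u: "0 \<le> u" "u * ((r + 1) * exp 2) \<le> 101/100"
    using r \<beta> D hyp by (simp_all add: u_def algebra_simps)
  have "r * u * exp 2 \<le> u * ((r + 1) * exp 2)" using u(1) by (simp add: algebra_simps)
  also have "\<dots> \<le> 34/100 * exp (11/10)"
    using u(2) by (intro order_trans[OF _ exp_lower_bound_numeral]) (auto simp: power_divide)
  also have "exp (11/10 :: real) = E^2 * exp 2"
    by (simp add: E_def power2_eq_square flip: exp_add)
  finally have ru: "r * u \<le> 34/100 * E^2" by simp
  have "u * (2 * exp 2) \<le> u * ((r + 1) * exp 2)" using r u(1) by (intro mult_left_mono) auto
  also have "\<dots> \<le> 22/100 * exp (31/20)"
    using u(2) by (intro order_trans[OF _ exp_lower_bound_numeral]) (auto simp: power_divide)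
  also have "exp (31/20 :: real) = E * exp 2" by (simp add: E_def flip: exp_add)
  finally have "u \<le> 11/100 * E" by simp
  obtain j where j: "k = Suc j" using k by (cases k) auto
  have "u ^ j \<le> (11/100 * E) ^ j" using \<open>u \<le> 11/100 * E\<close> u(1) by (rule power_mono)
  then have "(r * u) * u ^ j \<le> (34/100 * E^2) * (11/100 * E) ^ j"
    using u(1) r by (intro mult_mono[OF ru]) auto
  then have "(r * u) * u ^ j / D ^ k \<le> (34/100 * E^2) * (11/100 * E) ^ j / D ^ k"
    using D by (intro divide_right_mono) auto
  then show ?thesis
    using D unfolding j E_def[symmetric] u_def
    by (simp add: power_mult_distrib power_divide field_simps power2_eq_square)
qed

lemma diff_le_pred_mult:
  fixes n k D :: nat
  assumes "n + k \<le> D * (k + 1)" "1 \<le> k" "1 \<le> D"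
  shows "n - 1 \<le> (D - 1) * (k + 1)" "n - k \<le> (D - 1) * (k + 1)"
proof -
  have "(D - 1) * (k + 1) + (k + 1) = D * (k + 1)" using assms(3) by (cases D) auto
  then show "n - 1 \<le> (D - 1) * (k + 1)" "n - k \<le> (D - 1) * (k + 1)" using assms(1,2) by linarith+
qed

section \<open>Edge sets of a multigraph\<close>

definition edges_meet :: "('e \<Rightarrow> 'v set) \<Rightarrow> 'e \<Rightarrow> 'e \<Rightarrow> bool" where
  "edges_meet ends f h \<longleftrightarrow> ends f \<inter> ends h \<noteq> {}"

definition vertices_of :: "('e \<Rightarrow> 'v set) \<Rightarrow> 'e set \<Rightarrow> 'v set" where
  "vertices_of ends X = \<Union> (ends ` X)"

lemma card_Un_meeting_pair_le:
  assumes "finite W" "card B = 2" "B \<inter> W \<noteq> {}"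
  shows "card (W \<union> B) \<le> card W + 1"
proof -
  have "finite B" using assms(2) by (metis card.infinite zero_neq_numeral)
  then have "card (B - W) < card B" using assms(3) by (intro psubset_card_mono) auto
  moreover have "W \<union> B = W \<union> (B - W)" by blast
  ultimately show ?thesis using assms(2) card_Un_le[of W "B - W"] by simp
qed

lemma card_vertices_of_connected_le:
  assumes g: "finite g" "connected_at (edges_meet ends) g e" and two: "\<forall>f\<in>g. card (ends f) = 2"
  shows "card (vertices_of ends g) \<le> card g + 1"
proof -
  have "finite (ends f)" if "f \<in> g" for f
    using two that by (metis card.infinite zero_neq_numeral)
  then have fin: "finite (vertices_of ends S)" if "S \<subseteq> g" for S
    using that finite_subset[OF that g(1)] by (auto simp: vertices_of_def)
  have "e \<in> g" using g(2) by (simp add: connected_at_def)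
  have "\<exists>S. S \<subseteq> g \<and> e \<in> S \<and> card S = m \<and> card (vertices_of ends S) \<le> m + 1"
    if "1 \<le> m" "m \<le> card g" for m
    using that
  proof (induction m rule: nat_induct_at_least)
    case base
    show ?case using \<open>e \<in> g\<close> two by (intro exI[of _ "{e}"]) (auto simp: vertices_of_def)
  next
    case (Suc m)
    then obtain S where S: "S \<subseteq> g" "e \<in> S" "card S = m" "card (vertices_of ends S) \<le> m + 1"
      by auto
    then have "S \<subset> g" using Suc.prems by auto
    then obtain f h where f: "f \<in> g - S" and h: "h \<in> S" "edges_meet ends h f"
      using connected_at_escape[OF g(2) S(2)] by blast
    have "card (vertices_of ends S \<union> ends f) \<le> card (vertices_of ends S) + 1"
      using f h two fin[OF S(1)]
      by (intro card_Un_meeting_pair_le) (auto simp: vertices_of_def edges_meet_def)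
    moreover have "vertices_of ends (insert f S) = vertices_of ends S \<union> ends f"
      by (auto simp: vertices_of_def)
    moreover have "card (insert f S) = Suc m" using S f finite_subset[OF S(1) g(1)] by simp
    ultimately show ?case using S f by (intro exI[of _ "insert f S"]) auto
  qed
  moreover have "1 \<le> card g" using \<open>e \<in> g\<close> g(1) by (simp add: Suc_le_eq card_gt_0_iff) blast
  ultimately obtain S where "S \<subseteq> g" "card S = card g" "card (vertices_of ends S) \<le> card g + 1"
    by blast
  then show ?thesis using g(1) card_subset_eq by metis
qed

lemma sum_degrees_eq_sum_card_ends_Int:
  assumes "finite E" "finite W"
  shows "(\<Sum>v\<in>W. card {f\<in>E. v \<in> ends f}) = (\<Sum>f\<in>E. card (ends f \<inter> W))"
proof -
  have "(\<Sum>v\<in>W. card {f\<in>E. v \<in> ends f}) = (\<Sum>v\<in>W. \<Sum>f\<in>E. if v \<in> ends f then 1 else 0)"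
    using assms by (simp add: sum.inter_filter[symmetric])
  also have "\<dots> = (\<Sum>f\<in>E. \<Sum>v\<in>W. if v \<in> ends f then 1 else 0)" by (rule sum.swap)
  also have "\<dots> = (\<Sum>f\<in>E. card {v\<in>W. v \<in> ends f})"
    using assms by (simp add: sum.inter_filter[symmetric])
  also have "\<dots> = (\<Sum>f\<in>E. card (ends f \<inter> W))"
    by (intro sum.cong refl arg_cong[of _ _ card]) blast
  finally show ?thesis .
qed

text \<open>Each edge of \<open>g\<close> has both endpoints in \<open>vertices_of ends g\<close>, each other edge of the
  neighbourhood at least one, and every vertex has degree at most \<open>D\<close>.\<close>

lemma card_nbhd_add_card_le:
  assumes E: "finite E" "\<forall>f\<in>E. card (ends f) = 2" and gA: "g \<subseteq> A" "A \<subseteq> E"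
    and deg: "\<forall>v\<in>vertices_of ends g. card {f\<in>E. v \<in> ends f} \<le> D"
  shows "card (nbhd (edges_meet ends) A g) + card g \<le> D * card (vertices_of ends g)"
proof -
  let ?N = "nbhd (edges_meet ends) A g" and ?W = "vertices_of ends g"
  let ?c = "\<lambda>f. card (ends f \<inter> ?W)"
  have fin_ends: "finite (ends f)" "ends f \<noteq> {}" if "f \<in> E" for f
    using E(2) that by (metis card.infinite zero_neq_numeral, metis card.empty zero_neq_numeral)
  have fg: "finite g" and fN: "finite ?N" and NE: "?N \<subseteq> E"
    using gA E(1) by (auto simp: nbhd_def intro: finite_subset)
  have fW: "finite ?W" using fg gA fin_ends by (auto simp: vertices_of_def)
  have gN: "g \<subseteq> ?N" using gA fin_ends by (intro subset_nbhd) (auto simp: edges_meet_def)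
  have "card ?N + card g = (\<Sum>f\<in>g. 2) + (\<Sum>f\<in>?N - g. 1)"
    using fN gN fg by (simp add: card_Diff_subset card_mono)
  also have "\<dots> \<le> (\<Sum>f\<in>g. ?c f) + (\<Sum>f\<in>?N - g. ?c f)"
  proof (intro add_mono sum_mono)
    fix f assume "f \<in> g"
    then have "ends f \<inter> ?W = ends f" by (auto simp: vertices_of_def)
    then show "2 \<le> ?c f" using \<open>f \<in> g\<close> gA E(2) by auto
  next
    fix f assume f: "f \<in> ?N - g"
    then have "ends f \<inter> ?W \<noteq> {}" by (auto simp: nbhd_def edges_meet_def vertices_of_def)
    moreover have "finite (ends f)" using f NE fin_ends by blast
    ultimately have "0 < ?c f" by (simp add: card_gt_0_iff)
    then show "1 \<le> ?c f" by simp
  qed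
  also have "\<dots> = (\<Sum>f\<in>?N. ?c f)" using sum.subset_diff[OF gN fN, of ?c] by (simp add: add.commute)
  also have "\<dots> \<le> (\<Sum>f\<in>E. ?c f)" using NE E(1) by (intro sum_mono2) auto
  also have "\<dots> = (\<Sum>v\<in>?W. card {f\<in>E. v \<in> ends f})"
    using sum_degrees_eq_sum_card_ends_Int[OF E(1) fW] by simp
  also have "\<dots> \<le> D * card ?W"
    using sum_bounded_above[of ?W "\<lambda>v. card {f\<in>E. v \<in> ends f}" D] deg by (simp add: mult.commute)
  finally show ?thesis .
qed

section \<open>Taylor series of a logarithm\<close>

lemma summable_Taylor_coeffs_Ln:
  fixes Q :: "complex \<Rightarrow> complex" and R :: real
  assumes hol: "Q holomorphic_on ball 0 R" and R: "1 < R"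
    and nonzero: "\<And>t. t \<in> ball 0 R \<Longrightarrow> Q t \<noteq> 0" and Q0: "Q 0 = 1"
  shows "summable (\<lambda>n. cmod ((deriv ^^ n) (\<lambda>t. Ln (Q t)) 0 / fact n))"
proof -
  have "0 \<in> ball (0::complex) R" using R by simp
  then obtain g where g: "g holomorphic_on ball 0 R" and exp_g: "\<And>x. x \<in> ball 0 R \<Longrightarrow> exp (g x) = Q x"
    using holomorphic_logarithm_exists[OF convex_ball open_ball hol nonzero] by blast
  define h where "h x = g x - g 0" for x
  have h: "h holomorphic_on ball 0 R" unfolding h_def by (intro holomorphic_intros g)
  have exp_h: "exp (h x) = Q x" if "x \<in> ball 0 R" for x
    using exp_g[OF that] exp_g[OF \<open>0 \<in> ball 0 R\<close>] Q0 by (simp add: h_def exp_diff)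
  have "isCont h 0"
    using holomorphic_on_imp_continuous_on[OF h] \<open>0 \<in> ball 0 R\<close> continuous_on_eq_continuous_at
    by blast
  then have "(h \<longlongrightarrow> h 0) (nhds 0)" by (simp add: isCont_def tendsto_at_iff_tendsto_nhds)
  from order_tendstoD(2)[OF tendsto_norm[OF this], of 1]
  have "\<forall>\<^sub>F x in nhds 0. cmod (h x) < 1" by (simp add: h_def)
  moreover have "\<forall>\<^sub>F x in nhds 0. x \<in> ball 0 R"
    using \<open>0 \<in> ball 0 R\<close> by (intro eventually_nhds_in_open) auto
  ultimately have "\<forall>\<^sub>F x in nhds 0. Ln (Q x) = h x"
  proof eventually_elim
    case (elim x)
    then have "- pi < Im (h x)" "Im (h x) \<le> pi"
      using abs_Im_le_cmod[of "h x"] pi_gt3 by linarith+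
    then show ?case using exp_h[OF elim(2)] Ln_exp by metis
  qed
  then have deriv_eq: "(deriv ^^ n) (\<lambda>t. Ln (Q t)) 0 = (deriv ^^ n) h 0" for n
    by (rule higher_deriv_cong_ev) simp
  define r where "r = (1 + R) / 2"
  have r: "1 < r" "cball 0 r \<subseteq> ball (0::complex) R" using R by (auto simp: r_def)
  have cont: "continuous_on (cball 0 r) h"
    using holomorphic_on_imp_continuous_on[OF h] r(2) continuous_on_subset by blast
  obtain B where B: "B > 0" "\<And>w. w \<in> cball 0 r \<Longrightarrow> norm (h w) \<le> B"
    using compact_imp_bounded[OF compact_continuous_image[OF cont compact_cball]]
    by (auto simp: bounded_pos)
  have h_ball: "h w \<in> ball 0 (B + 1)" if "w \<in> ball 0 r" for w
  proof -
    have "norm (h w) \<le> B" using that by (intro B(2)) simp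
    then show ?thesis by simp
  qed
  have sub: "ball 0 r \<subseteq> ball (0::complex) R" using r(2) ball_subset_cball by blast
  have Cauchy: "cmod ((deriv ^^ n) h 0) \<le> fact n * (B + 1) / r ^ n" if "n \<ge> 1" for n
    by (rule Cauchy_higher_deriv_bound[OF holomorphic_on_subset[OF h sub] cont h_ball])
      (use r(1) that in simp_all)
  have coeff: "cmod ((deriv ^^ n) h 0 / fact n) \<le> (B + 1) * (1 / r) ^ n" if "n \<ge> 1" for n
    using Cauchy[OF that] by (simp add: norm_divide field_simps power_divide)
  have "summable (\<lambda>n. (B + 1) * (1 / r) ^ n)"
    using r by (intro summable_mult summable_geometric) auto
  then show ?thesis unfolding deriv_eq
    by (rule summable_comparison_test[rotated]) (use coeff in \<open>auto intro!: exI[of _ 1]\<close>)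
qed

section \<open>The edge-spin model as a polymer model\<close>

text \<open>Polymers are sets of edges: the weight of \<open>X\<close> collects the (normalised) configurations
  whose non-zero spins lie exactly on \<open>X\<close>.\<close>

locale edge_model =
  fixes \<kappa> :: nat and V :: "'v set" and ends :: "'e \<Rightarrow> 'v set" and es :: "'e list"
    and \<pi> :: "'v \<Rightarrow> sig" and z :: "nat \<Rightarrow> complex" and F :: "sig set"
  assumes finite_F: "finite F" and F0: "\<forall>f\<in>F. in_F0 f" and graph: "is_graph V ends es"
    and \<pi>: "\<forall>v\<in>V. \<pi> v \<in> F \<and> fst (\<pi> v) = length (inc_edges ends es v)"
    and z0: "z 0 \<noteq> 0"
begin

abbreviation "E \<equiv> set es"
abbreviation "inc v \<equiv> inc_edges ends es v"

definition "\<Delta> = max_degree V ends es"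
definition "r1 = max 1 (ratio_rF \<kappa> F)"

definition normalized_sig :: "'v \<Rightarrow> nat list \<Rightarrow> complex" where
  "normalized_sig v xs = snd (\<pi> v) xs / zero_val (\<pi> v)"

definition edge_weight :: "complex \<Rightarrow> nat \<Rightarrow> complex" where
  "edge_weight t i = (if i = 0 then 1 else t * (z i / z 0))"

definition config_weight :: "complex \<Rightarrow> ('e \<Rightarrow> nat) \<Rightarrow> complex" where
  "config_weight t \<sigma> = (\<Prod>v\<in>V. normalized_sig v (map \<sigma> (inc v))) * (\<Prod>e\<in>E. edge_weight t (\<sigma> e))"

definition supported_configs :: "'e set \<Rightarrow> ('e \<Rightarrow> nat) set" where
  "supported_configs X = PiE E (\<lambda>e. if e \<in> X then {1..\<kappa>} else {0})"

definition polymer_weight :: "complex \<Rightarrow> 'e set \<Rightarrow> complex" where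
  "polymer_weight t X = (\<Sum>\<sigma>\<in>supported_configs X. config_weight t \<sigma>)"

lemma finite_V: "finite V" and card_ends: "e \<in> E \<Longrightarrow> card (ends e) = 2"
  and ends_subset_V: "e \<in> E \<Longrightarrow> ends e \<subseteq> V"
  using graph by (auto simp: is_graph_def)

lemma ends_nonempty: "e \<in> E \<Longrightarrow> ends e \<noteq> {}"
  using card_ends by force

lemma set_inc: "set (inc v) = {e\<in>E. v \<in> ends e}"
  by (simp add: inc_edges_def)

lemma card_incident_le_\<Delta>: "v \<in> V \<Longrightarrow> card {f\<in>E. v \<in> ends f} \<le> \<Delta>"
  using graph finite_V unfolding \<Delta>_def max_degree_def is_graph_def
  by (subst set_inc[symmetric], subst distinct_card) (auto simp: inc_edges_def)

lemma \<Delta>_pos: "e \<in> E \<Longrightarrow> 1 \<le> \<Delta>"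
proof -
  assume e: "e \<in> E"
  then obtain v where v: "v \<in> ends e" using ends_nonempty by blast
  then have "0 < card {f\<in>E. v \<in> ends f}" using e by (auto simp: card_gt_0_iff)
  then show ?thesis using card_incident_le_\<Delta>[of v] ends_subset_V[OF e] v by auto
qed

lemma normalized_sig_zeros:
  assumes "v \<in> V" "\<forall>e\<in>set (inc v). \<sigma> e = 0"
  shows "normalized_sig v (map \<sigma> (inc v)) = 1"
proof -
  have "map \<sigma> (inc v) = replicate (length (inc v)) 0"
    using assms(2) by (simp add: map_replicate_const[symmetric] del: map_replicate_const)
  moreover have "zero_val (\<pi> v) \<noteq> 0" using assms(1) \<pi> F0 by (auto simp: in_F0_def)
  ultimately show ?thesis using assms(1) \<pi> by (auto simp: normalized_sig_def zero_val_def)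
qed

lemma norm_normalized_sig_le:
  assumes v: "v \<in> V" and xs: "set xs \<subseteq> {0..\<kappa>}" "length xs = length (inc v)"
  shows "cmod (normalized_sig v xs) \<le> r1"
proof (cases "xs = replicate (length (inc v)) 0")
  case True
  then show ?thesis
    using normalized_sig_zeros[OF v, of "\<lambda>_. 0"] by (simp add: r1_def map_replicate_const)
next
  case False
  let ?f = "\<pi> v"
  have "finite (sig_dom \<kappa> (fst ?f))"
    using finite_lists_length_eq[of "{0..\<kappa>}" "fst ?f"] by (simp add: sig_dom_def conj_commute)
  moreover have "xs \<in> sig_dom \<kappa> (fst ?f) - {replicate (fst ?f) 0}"
    using xs False v \<pi> by (simp add: sig_dom_def)
  ultimately have "cmod (snd ?f xs) / cmod (zero_val ?f) \<le> ratio_r \<kappa> ?f"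
    unfolding ratio_r_def by (intro Max_ge) auto
  also have "\<dots> \<le> ratio_rF \<kappa> F"
    unfolding ratio_rF_def using finite_F v \<pi> by (intro Max_ge) auto
  finally show ?thesis by (simp add: normalized_sig_def norm_divide r1_def)
qed

lemma supported_configs_iff:
  "\<sigma> \<in> supported_configs X \<longleftrightarrow>
     \<sigma> \<in> extensional E \<and> (\<forall>e\<in>E. e \<in> X \<longrightarrow> \<sigma> e \<in> {1..\<kappa>}) \<and> (\<forall>e\<in>E. e \<notin> X \<longrightarrow> \<sigma> e = 0)"
  by (auto simp: supported_configs_def PiE_iff)

lemma config_weight_merge:
  assumes sep: "\<forall>h\<in>g. \<forall>y\<in>Y. ends h \<inter> ends y = {}"
    and \<sigma>1: "\<sigma>1 \<in> supported_configs g" and \<sigma>2: "\<sigma>2 \<in> supported_configs Y"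
  shows "config_weight t (\<lambda>e. if e \<in> g then \<sigma>1 e else \<sigma>2 e) = config_weight t \<sigma>1 * config_weight t \<sigma>2"
proof -
  let ?\<sigma> = "\<lambda>e. if e \<in> g then \<sigma>1 e else \<sigma>2 e"
  have zero1: "\<sigma>1 e = 0" if "e \<in> E" "e \<notin> g" for e using \<sigma>1 that by (auto simp: supported_configs_iff)
  have zero2: "\<sigma>2 e = 0" if "e \<in> E" "e \<notin> Y" for e using \<sigma>2 that by (auto simp: supported_configs_iff)
  \<comment> \<open>no vertex is incident to edges of both \<open>g\<close> and \<open>Y\<close>\<close>
  have vertex: "normalized_sig v (map ?\<sigma> (inc v)) =
      normalized_sig v (map \<sigma>1 (inc v)) * normalized_sig v (map \<sigma>2 (inc v))" if v: "v \<in> V" for v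
  proof (cases "\<exists>h\<in>set (inc v). h \<in> g")
    case True
    then have "\<forall>e\<in>set (inc v). e \<notin> Y" using sep by (auto simp: set_inc)
    then show ?thesis
      using zero1 zero2 normalized_sig_zeros[OF v, of \<sigma>2]
      by (auto simp: set_inc intro!: arg_cong2[of _ _ _ _ normalized_sig] map_cong)
  next
    case False
    then show ?thesis
      using zero1 normalized_sig_zeros[OF v, of \<sigma>1]
      by (auto simp: set_inc intro!: arg_cong2[of _ _ _ _ normalized_sig] map_cong)
  qed
  have edge: "edge_weight t (?\<sigma> e) = edge_weight t (\<sigma>1 e) * edge_weight t (\<sigma>2 e)" if "e \<in> E" for e
  proof -
    have "e \<notin> g \<or> e \<notin> Y" using sep ends_nonempty[OF that] by blast
    then show ?thesis using that by (cases "e \<in> g") (auto simp: edge_weight_def zero1 zero2)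
  qed
  show ?thesis
    unfolding config_weight_def by (simp add: vertex edge prod.distrib cong: prod.cong)
qed

lemma polymer_weight_Un:
  assumes g: "g \<subseteq> E" and Y: "Y \<subseteq> E" and sep: "\<forall>h\<in>g. \<forall>y\<in>Y. ends h \<inter> ends y = {}"
  shows "polymer_weight t (g \<union> Y) = polymer_weight t g * polymer_weight t Y"
proof -
  have disjoint: "e \<notin> Y" if "e \<in> g" for e
    using sep that g ends_nonempty by blast
  define merge where "merge p = (\<lambda>e. if e \<in> g then fst p e else snd p e)"
    for p :: "('e \<Rightarrow> nat) \<times> ('e \<Rightarrow> nat)"
  define split where "split \<sigma> = (restrict (\<lambda>e. if e \<in> g then \<sigma> e else 0) E,
                                   restrict (\<lambda>e. if e \<in> g then 0 else \<sigma> e) E)" for \<sigma> :: "'e \<Rightarrow> nat"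
  have "polymer_weight t g * polymer_weight t Y =
      (\<Sum>p\<in>supported_configs g \<times> supported_configs Y. config_weight t (fst p) * config_weight t (snd p))"
    unfolding polymer_weight_def sum_product sum.cartesian_product by (simp add: split_beta)
  also have "\<dots> = (\<Sum>p\<in>supported_configs g \<times> supported_configs Y. config_weight t (merge p))"
    using config_weight_merge[OF sep] by (intro sum.cong) (auto simp: merge_def)
  also have "\<dots> = polymer_weight t (g \<union> Y)"
    unfolding polymer_weight_def
  proof (rule sum.reindex_bij_witness[where i = split and j = merge])
    fix \<sigma> assume "\<sigma> \<in> supported_configs (g \<union> Y)"
    then show "merge (split \<sigma>) = \<sigma>" "split \<sigma> \<in> supported_configs g \<times> supported_configs Y"
      using g disjoint
      by (auto simp: merge_def split_def supported_configs_iff extensional_def fun_eq_iff)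
  next
    fix p assume "p \<in> supported_configs g \<times> supported_configs Y"
    then show "split (merge p) = p" "merge p \<in> supported_configs (g \<union> Y)"
      using g Y disjoint
      by (auto simp: merge_def split_def supported_configs_iff extensional_def fun_eq_iff)
  qed simp
  finally show ?thesis ..
qed

lemma polymer_weight_empty: "polymer_weight t {} = 1"
proof -
  have "supported_configs {} = {restrict (\<lambda>_. 0) E}"
    unfolding supported_configs_def by (simp add: PiE_eq_singleton)
  moreover have "normalized_sig v (map (restrict (\<lambda>_. 0) E) (inc v)) = 1" if "v \<in> V" for v
    using that by (intro normalized_sig_zeros) (auto simp: inc_edges_def)
  ultimately show ?thesis by (simp add: polymer_weight_def config_weight_def edge_weight_def)
qed

lemma poly_P_eq_sum_config_weight:
  "poly_P \<kappa> V ends es \<pi> z t = (\<Sum>\<sigma>\<in>PiE E (\<lambda>_. {0..\<kappa>}). config_weight t \<sigma>)"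
proof -
  define z' where "z' i = (if i = 0 then z 0 else t * z i)" for i
  define c where "c = z 0 ^ length es * (\<Prod>v\<in>V. zero_val (\<pi> v))"
  have zero_val: "zero_val (\<pi> v) \<noteq> 0" if "v \<in> V" for v
    using that \<pi> F0 by (auto simp: in_F0_def)
  then have "c \<noteq> 0" using z0 finite_V by (simp add: c_def)
  have "(\<Prod>v\<in>V. snd (\<pi> v) (map \<sigma> (inc v))) * (\<Prod>i=0..\<kappa>. z' i ^ card {e\<in>E. \<sigma> e = i})
        = c * config_weight t \<sigma>" if \<sigma>: "\<sigma> \<in> PiE E (\<lambda>_. {0..\<kappa>})" for \<sigma>
  proof -
    have "(\<Prod>i=0..\<kappa>. z' i ^ card {e\<in>E. \<sigma> e = i}) = (\<Prod>i=0..\<kappa>. \<Prod>e | e \<in> E \<and> \<sigma> e = i. z' (\<sigma> e))"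
      by (intro prod.cong) simp_all
    also have "\<dots> = (\<Prod>e\<in>E. z' (\<sigma> e))"
      using \<sigma> by (intro prod.group) auto
    also have "\<dots> = (\<Prod>e\<in>E. z 0 * edge_weight t (\<sigma> e))"
      using z0 by (intro prod.cong) (simp_all add: z'_def edge_weight_def)
    also have "\<dots> = z 0 ^ length es * (\<Prod>e\<in>E. edge_weight t (\<sigma> e))"
      using graph by (simp add: prod.distrib distinct_card is_graph_def)
    finally have edges: "(\<Prod>i=0..\<kappa>. z' i ^ card {e\<in>E. \<sigma> e = i}) =
        z 0 ^ length es * (\<Prod>e\<in>E. edge_weight t (\<sigma> e))" .
    have "(\<Prod>v\<in>V. snd (\<pi> v) (map \<sigma> (inc v))) = (\<Prod>v\<in>V. zero_val (\<pi> v) * normalized_sig v (map \<sigma> (inc v)))"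
      using zero_val by (intro prod.cong) (simp_all add: normalized_sig_def)
    then show ?thesis
      unfolding edges c_def config_weight_def by (simp add: prod.distrib mult_ac)
  qed
  then have "partition_fn \<kappa> V ends es \<pi> z' = c * (\<Sum>\<sigma>\<in>PiE E (\<lambda>_. {0..\<kappa>}). config_weight t \<sigma>)"
    unfolding partition_fn_def sum_distrib_left by (intro sum.cong) simp_all
  then show ?thesis using \<open>c \<noteq> 0\<close>
    unfolding poly_P_def z'_def[abs_def, symmetric] c_def[symmetric] by simp
qed

lemma sum_config_weight_eq_subset_sum:
  "(\<Sum>\<sigma>\<in>PiE E (\<lambda>_. {0..\<kappa>}). config_weight t \<sigma>) = subset_sum (polymer_weight t) E"
proof -
  let ?support = "\<lambda>\<sigma>. {e\<in>E. \<sigma> e \<noteq> 0}"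
  have "{\<sigma> \<in> PiE E (\<lambda>_. {0..\<kappa>}). ?support \<sigma> = X} = supported_configs X" if X: "X \<subseteq> E" for X
  proof (intro set_eqI iffI)
    fix \<sigma> assume "\<sigma> \<in> {\<sigma> \<in> PiE E (\<lambda>_. {0..\<kappa>}). ?support \<sigma> = X}"
    then show "\<sigma> \<in> supported_configs X" by (auto simp: supported_configs_iff PiE_iff)
  next
    fix \<sigma> assume \<sigma>: "\<sigma> \<in> supported_configs X"
    have "\<sigma> e \<in> {0..\<kappa>} \<and> (\<sigma> e \<noteq> 0 \<longleftrightarrow> e \<in> X)" if "e \<in> E" for e
      using \<sigma> that by (cases "e \<in> X") (auto simp: supported_configs_iff)
    then show "\<sigma> \<in> {\<sigma> \<in> PiE E (\<lambda>_. {0..\<kappa>}). ?support \<sigma> = X}"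
      using \<sigma> X by (auto simp: supported_configs_iff PiE_iff)
  qed
  then have "(\<Sum>\<sigma>\<in>PiE E (\<lambda>_. {0..\<kappa>}). config_weight t \<sigma>) =
      (\<Sum>X\<in>Pow E. \<Sum>\<sigma> | \<sigma> \<in> PiE E (\<lambda>_. {0..\<kappa>}) \<and> ?support \<sigma> = X. config_weight t \<sigma>)"
    by (intro sum.group[symmetric]) (auto intro: finite_PiE)
  also have "\<dots> = subset_sum (polymer_weight t) E"
    using \<open>\<And>X. X \<subseteq> E \<Longrightarrow> _\<close> unfolding subset_sum_def polymer_weight_def by (intro sum.cong) auto
  finally show ?thesis .
qed

lemma norm_prod_normalized_sig_le:
  assumes X: "X \<subseteq> E" and \<sigma>: "\<sigma> \<in> supported_configs X"
  shows "cmod (\<Prod>v\<in>V. normalized_sig v (map \<sigma> (inc v))) \<le> r1 ^ card (vertices_of ends X)"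
proof -
  let ?W = "vertices_of ends X" and ?n = "\<lambda>v. cmod (normalized_sig v (map \<sigma> (inc v)))"
  have W: "?W \<subseteq> V" using X ends_subset_V by (auto simp: vertices_of_def)
  have "(\<Prod>v\<in>V - ?W. ?n v) = 1"
  proof (intro prod.neutral ballI)
    fix v assume v: "v \<in> V - ?W"
    then have "\<forall>e\<in>set (inc v). \<sigma> e = 0"
      using \<sigma> by (auto simp: set_inc vertices_of_def supported_configs_iff)
    then show "?n v = 1" using normalized_sig_zeros v by simp
  qed
  then have "cmod (\<Prod>v\<in>V. normalized_sig v (map \<sigma> (inc v))) = (\<Prod>v\<in>V \<inter> ?W. ?n v)"
    by (simp add: prod_norm norm_mult prod.Int_Diff[OF finite_V, of _ ?W])
  also have "\<dots> \<le> r1 ^ card (V \<inter> ?W)"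
  proof (intro prod_le_power conjI norm_ge_zero norm_normalized_sig_le)
    show "1 \<le> r1" by (simp add: r1_def)
  next
    fix v assume "v \<in> V \<inter> ?W"
    then show "v \<in> V" "length (map \<sigma> (inc v)) = length (inc v)" by auto
    show "set (map \<sigma> (inc v)) \<subseteq> {0..\<kappa>}"
      using \<sigma> by (force simp: supported_configs_iff set_inc)
  qed simp
  also have "\<dots> \<le> r1 ^ card ?W"
    using W finite_V by (intro power_increasing card_mono) (auto simp: r1_def intro: finite_subset)
  finally show ?thesis .
qed

lemma sum_prod_norm_edge_weight:
  assumes "X \<subseteq> E"
  shows "(\<Sum>\<sigma>\<in>supported_configs X. \<Prod>e\<in>E. cmod (edge_weight t (\<sigma> e)))
         = (\<Sum>i\<in>{1..\<kappa>}. cmod (edge_weight t i)) ^ card X"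
proof -
  have "(\<Sum>\<sigma>\<in>supported_configs X. \<Prod>e\<in>E. cmod (edge_weight t (\<sigma> e)))
      = (\<Prod>e\<in>E. \<Sum>i\<in>(if e \<in> X then {1..\<kappa>} else {0}). cmod (edge_weight t i))"
    unfolding supported_configs_def by (rule prod_sum_PiE[symmetric]) auto
  also have "\<dots> = (\<Prod>e\<in>X. \<Sum>i\<in>{1..\<kappa>}. cmod (edge_weight t i))"
    using assms by (intro prod.mono_neutral_cong_right) (auto simp: edge_weight_def)
  finally show ?thesis by simp
qed

lemma norm_polymer_weight_le:
  assumes "X \<subseteq> E"
  shows "cmod (polymer_weight t X) \<le>
    r1 ^ card (vertices_of ends X) * (\<Sum>i\<in>{1..\<kappa>}. cmod (edge_weight t i)) ^ card X"
proof -
  have "cmod (polymer_weight t X) \<le> (\<Sum>\<sigma>\<in>supported_configs X. cmod (config_weight t \<sigma>))"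
    unfolding polymer_weight_def by (rule norm_sum)
  also have "\<dots> \<le> (\<Sum>\<sigma>\<in>supported_configs X.
      r1 ^ card (vertices_of ends X) * (\<Prod>e\<in>E. cmod (edge_weight t (\<sigma> e))))"
  proof (rule sum_mono)
    fix \<sigma> assume \<sigma>: "\<sigma> \<in> supported_configs X"
    have "cmod (config_weight t \<sigma>) = cmod (\<Prod>v\<in>V. normalized_sig v (map \<sigma> (inc v))) *
        (\<Prod>e\<in>E. cmod (edge_weight t (\<sigma> e)))"
      by (simp add: config_weight_def norm_mult prod_norm)
    also have "\<dots> \<le> r1 ^ card (vertices_of ends X) * (\<Prod>e\<in>E. cmod (edge_weight t (\<sigma> e)))"
      by (rule mult_right_mono[OF norm_prod_normalized_sig_le[OF assms \<sigma>]]) (simp add: prod_nonneg)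
    finally show "cmod (config_weight t \<sigma>) \<le> \<dots>" .
  qed
  finally show ?thesis
    using sum_prod_norm_edge_weight[OF assms] by (simp add: sum_distrib_left[symmetric])
qed

lemma sum_norm_edge_weight_le:
  assumes t: "cmod t \<le> 101/100"
    and hyp: "\<forall>i\<in>{1..\<kappa>}. cmod (z i) * (real \<Delta> * real \<kappa> * exp 2 * r1 * (r1 + 1)) \<le> cmod (z 0)"
  shows "(\<Sum>i\<in>{1..\<kappa>}. cmod (edge_weight t i)) * (real \<Delta> * exp 2 * r1 * (r1 + 1)) \<le> 101/100"
proof (cases "\<kappa> = 0")
  case False
  define K where "K = real \<Delta> * exp 2 * r1 * (r1 + 1)"
  have "cmod (edge_weight t i) * K \<le> cmod t / \<kappa>" if i: "i \<in> {1..\<kappa>}" for i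
  proof -
    have "cmod (z i) * K \<le> cmod (z 0) / \<kappa>"
      using hyp i False by (simp add: K_def field_simps)
    then have "cmod t * (cmod (z i) * K) / cmod (z 0) \<le> cmod t * (cmod (z 0) / \<kappa>) / cmod (z 0)"
      using z0 by (intro divide_right_mono mult_left_mono) auto
    then show ?thesis using i z0 by (simp add: edge_weight_def norm_mult norm_divide)
  qed
  then have "(\<Sum>i\<in>{1..\<kappa>}. cmod (edge_weight t i)) * K \<le> (\<Sum>i\<in>{1..\<kappa>}. cmod t / \<kappa>)"
    unfolding sum_distrib_right by (rule sum_mono)
  then show ?thesis using t False by (simp add: K_def)
qed simp

lemma connected_edge_set_card_bounds:
  assumes A: "A \<subseteq> E" and g: "g \<subseteq> A" "connected_at (edges_meet ends) g e"
  shows "1 \<le> card g" "card (vertices_of ends g) \<le> card g + 1"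
    "card (nbhd (edges_meet ends) A g) + card g \<le> \<Delta> * (card g + 1)"
proof -
  have fin: "finite g" and "e \<in> g" "g \<subseteq> E"
    using g A finite_subset[of g E] by (auto simp: connected_at_def)
  then show "1 \<le> card g" by (auto simp: Suc_le_eq card_gt_0_iff)
  show m: "card (vertices_of ends g) \<le> card g + 1"
    using card_vertices_of_connected_le[OF fin g(2)] \<open>g \<subseteq> E\<close> card_ends by auto
  have "vertices_of ends g \<subseteq> V" using \<open>g \<subseteq> E\<close> ends_subset_V by (auto simp: vertices_of_def)
  then have "card (nbhd (edges_meet ends) A g) + card g \<le> \<Delta> * card (vertices_of ends g)"
    using g A card_ends card_incident_le_\<Delta> by (intro card_nbhd_add_card_le) auto
  with m show "card (nbhd (edges_meet ends) A g) + card g \<le> \<Delta> * (card g + 1)"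
    by (meson le_trans mult_le_mono2)
qed

lemma norm_polymer_weight_le_counting_weight:
  assumes \<beta>: "(\<Sum>i\<in>{1..\<kappa>}. cmod (edge_weight t i)) * (real \<Delta> * exp 2 * r1 * (r1 + 1)) \<le> 101/100"
    and A: "A \<subseteq> E" and g: "g \<subseteq> A" "connected_at (edges_meet ends) g e"
  defines "p \<equiv> 11/100 / real \<Delta>" and "q \<equiv> 34/100 / real \<Delta>"
  shows "cmod (polymer_weight t g) / (1 - q) ^ (card (nbhd (edges_meet ends) A g) - 1)
         \<le> q / p * (p ^ card g * (1 - p) ^ (card (nbhd (edges_meet ends) A g) - card g))"
proof -
  define \<beta> where "\<beta> = (\<Sum>i\<in>{1..\<kappa>}. cmod (edge_weight t i))"
  define k where "k = card g"
  define n where "n = card (nbhd (edges_meet ends) A g)"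
  note bounds = connected_edge_set_card_bounds[OF A g, folded k_def n_def]
  have \<Delta>: "1 \<le> \<Delta>" using \<Delta>_pos g A by (auto simp: connected_at_def)
  note exponents = diff_le_pred_mult[OF bounds(3) bounds(1) \<Delta>]
  have p: "0 < p" "p < 1" and q: "0 < q" "q < 1" using \<Delta> by (auto simp: p_def q_def field_simps)
  have "exp (- 45/100) ^ (k + 1) \<le> ((1 - p) ^ (\<Delta> - 1) * (1 - q) ^ (\<Delta> - 1)) ^ (k + 1)"
    unfolding p_def q_def using exp_neg_le_Dobrushin_factors[OF \<Delta>] by (intro power_mono) auto
  also have "\<dots> = (1 - p) ^ ((\<Delta> - 1) * (k + 1)) * (1 - q) ^ ((\<Delta> - 1) * (k + 1))"
    by (simp only: power_mult power_mult_distrib)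
  also have "\<dots> \<le> (1 - p) ^ (n - k) * (1 - q) ^ (n - 1)"
    using p q exponents by (intro mult_mono power_decreasing) auto
  finally have factors: "exp (- 45/100) ^ (k + 1) \<le> (1 - p) ^ (n - k) * (1 - q) ^ (n - 1)" .
  have "0 \<le> \<beta>" by (simp add: \<beta>_def sum_nonneg)
  have "cmod (polymer_weight t g) \<le> r1 ^ card (vertices_of ends g) * \<beta> ^ k"
    unfolding k_def \<beta>_def using g A by (intro norm_polymer_weight_le) auto
  also have "\<dots> \<le> r1 ^ (k + 1) * \<beta> ^ k"
    using bounds(2) \<open>0 \<le> \<beta>\<close> by (intro mult_right_mono power_increasing) (auto simp: r1_def)
  also have "\<dots> \<le> q * p ^ (k - 1) * exp (- 45/100) ^ (k + 1)"
    unfolding p_def q_def using \<Delta> bounds(1) \<open>0 \<le> \<beta>\<close> \<beta>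
    by (intro polymer_numeric_bound) (auto simp: r1_def \<beta>_def)
  also have "\<dots> \<le> q * p ^ (k - 1) * ((1 - p) ^ (n - k) * (1 - q) ^ (n - 1))"
    using p q by (intro mult_left_mono[OF factors]) auto
  finally have "cmod (polymer_weight t g) / (1 - q) ^ (n - 1) \<le> q * p ^ (k - 1) * (1 - p) ^ (n - k)"
    using q by (simp add: divide_le_eq mult_ac)
  also have "\<dots> = q / p * (p ^ k * (1 - p) ^ (n - k))"
    using p bounds(1) by (cases k) (simp_all add: field_simps)
  finally show ?thesis by (simp add: n_def k_def)
qed

lemma dobrushin_condition:
  assumes \<beta>: "(\<Sum>i\<in>{1..\<kappa>}. cmod (edge_weight t i)) * (real \<Delta> * exp 2 * r1 * (r1 + 1)) \<le> 101/100"
    and A: "A \<subseteq> E" and e: "e \<in> A"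
  defines "q \<equiv> 34/100 / real \<Delta>"
  shows "(\<Sum>g | g \<subseteq> A \<and> connected_at (edges_meet ends) g e.
           cmod (polymer_weight t g) / (1 - q) ^ (card (nbhd (edges_meet ends) A g) - 1)) \<le> q"
proof -
  define p where "p = 11/100 / real \<Delta>"
  let ?G = "{g. g \<subseteq> A \<and> connected_at (edges_meet ends) g e}" and ?N = "nbhd (edges_meet ends) A"
  have "1 \<le> \<Delta>" using \<Delta>_pos A e by blast
  then have p: "0 < p" "p < 1" by (auto simp: p_def field_simps)
  have "(\<Sum>g\<in>?G. cmod (polymer_weight t g) / (1 - q) ^ (card (?N g) - 1))
      \<le> (\<Sum>g\<in>?G. q / p * (p ^ card g * (1 - p) ^ (card (?N g) - card g)))"
    using \<beta> A unfolding p_def q_def by (intro sum_mono norm_polymer_weight_le_counting_weight) auto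
  also have "\<dots> = q / p * (\<Sum>g\<in>?G. p ^ card g * (1 - p) ^ (card (?N g) - card g))"
    by (rule sum_distrib_left[symmetric])
  also have "\<dots> = q / p * p"
    using A ends_nonempty finite_subset[of A E]
    by (subst sum_connected_at_probability[OF _ e _ p]) (auto simp: edges_meet_def)
  finally show ?thesis using p by simp
qed

lemma poly_P_eq_subset_sum: "poly_P \<kappa> V ends es \<pi> z t = subset_sum (polymer_weight t) E"
  by (simp add: poly_P_eq_sum_config_weight sum_config_weight_eq_subset_sum)

lemma poly_P_nonzero:
  assumes t: "cmod t \<le> 101/100"
    and hyp: "\<forall>i\<in>{1..\<kappa>}. cmod (z i) * (real \<Delta> * real \<kappa> * exp 2 * r1 * (r1 + 1)) \<le> cmod (z 0)"
  shows "poly_P \<kappa> V ends es \<pi> z t \<noteq> 0"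
proof (cases "E = {}")
  case True
  then have "subset_sum (polymer_weight t) E = polymer_weight t {}" by (simp add: subset_sum_def)
  then show ?thesis by (simp add: poly_P_eq_subset_sum polymer_weight_empty)
next
  case False
  then obtain e where "e \<in> E" by (meson ex_in_conv)
  then have "1 \<le> \<Delta>" by (rule \<Delta>_pos)
  then have q: "0 < 34/100 / real \<Delta>" "34/100 / real \<Delta> < 1" by (auto simp: field_simps)
  have reflexive: "\<forall>x\<in>E. edges_meet ends x x" using ends_nonempty by (simp add: edges_meet_def)
  have "subset_sum (polymer_weight t) E \<noteq> 0"
  proof (rule conjunct1[OF dobrushin_criterion[of E "edges_meet ends" "polymer_weight t" _ E]])
    fix A e g Y assume A: "A \<subseteq> E" "g \<subseteq> A" "Y \<subseteq> A - nbhd (edges_meet ends) A g"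
    then have "\<forall>h\<in>g. \<forall>y\<in>Y. ends h \<inter> ends y = {}"
      unfolding nbhd_def edges_meet_def by blast
    with A show "polymer_weight t (g \<union> Y) = polymer_weight t g * polymer_weight t Y"
      by (intro polymer_weight_Un) auto
  next
    fix A e assume "A \<subseteq> E" "e \<in> A"
    then show "(\<Sum>g | g \<subseteq> A \<and> connected_at (edges_meet ends) g e. cmod (polymer_weight t g) /
        (1 - 34/100 / real \<Delta>) ^ (card (nbhd (edges_meet ends) A g) - 1)) \<le> 34/100 / real \<Delta>"
      by (rule dobrushin_condition[OF sum_norm_edge_weight_le[OF t hyp]])
  qed (use q reflexive in \<open>simp_all add: polymer_weight_empty\<close>)
  then show ?thesis by (simp add: poly_P_eq_subset_sum)
qed

lemma poly_P_holomorphic: "(\<lambda>t. poly_P \<kappa> V ends es \<pi> z t) holomorphic_on S"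
proof -
  have "(\<lambda>t. edge_weight t i) holomorphic_on S" for i
    by (cases "i = 0") (simp_all add: edge_weight_def holomorphic_intros)
  then show ?thesis
    unfolding poly_P_eq_sum_config_weight config_weight_def by (intro holomorphic_intros)
qed

lemma poly_P_0: "poly_P \<kappa> V ends es \<pi> z 0 = 1"
proof -
  have "polymer_weight 0 X = 0" if X: "X \<subseteq> E" "X \<noteq> {}" for X
  proof -
    obtain e where "e \<in> X" using X(2) by blast
    then have "config_weight 0 \<sigma> = 0" if "\<sigma> \<in> supported_configs X" for \<sigma>
      using that X(1) by (force simp: config_weight_def edge_weight_def supported_configs_iff)
    then show ?thesis by (simp add: polymer_weight_def)
  qed
  then have "subset_sum (polymer_weight 0) E = polymer_weight 0 {}"
    unfolding subset_sum_def by (subst sum.remove[of _ "{}"]) auto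
  then show ?thesis by (simp add: poly_P_eq_subset_sum polymer_weight_empty)
qed

end

theorem mainTheorem9:
  fixes F :: "sig set" and \<kappa> :: nat and V :: "'v set" and ends :: "'e \<Rightarrow> 'v set"
    and es :: "'e list" and \<pi> :: "'v \<Rightarrow> sig" and z :: "nat \<Rightarrow> complex"
  assumes "finite F" and "\<forall>f\<in>F. in_F0 f"
    and "is_graph V ends es"
    and "\<forall>v\<in>V. \<pi> v \<in> F \<and> fst (\<pi> v) = length (inc_edges ends es v)"
    and "z 0 \<noteq> 0"
    and "\<forall>i\<in>{1..\<kappa>}. cmod (z i) * (real (max_degree V ends es) * real \<kappa> * exp 2
            * max 1 (ratio_rF \<kappa> F) * (max 1 (ratio_rF \<kappa> F) + 1)) \<le> cmod (z 0)"
  shows "partition_fn \<kappa> V ends es \<pi> z \<noteq> 0 \<and>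
    summable (\<lambda>n. cmod ((deriv ^^ n) (\<lambda>t. Ln (poly_P \<kappa> V ends es \<pi> z t)) 0 / fact n))"
proof -
  interpret edge_model \<kappa> V ends es \<pi> z F using assms(1-5) by unfold_locales
  have nonzero: "poly_P \<kappa> V ends es \<pi> z t \<noteq> 0" if "cmod t \<le> 101/100" for t
    using poly_P_nonzero[OF that] assms(6) by (simp add: \<Delta>_def r1_def)
  have "(\<lambda>i. if i = 0 then z 0 else 1 * z i) = z" by auto
  then have "partition_fn \<kappa> V ends es \<pi> z \<noteq> 0"
    using nonzero[of 1] by (auto simp: poly_P_def)
  moreover have "summable (\<lambda>n. cmod ((deriv ^^ n) (\<lambda>t. Ln (poly_P \<kappa> V ends es \<pi> z t)) 0 / fact n))"
    using nonzero by (intro summable_Taylor_coeffs_Ln[of _ "101/100"] poly_P_holomorphic poly_P_0) auto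
  ultimately show ?thesis ..
qed

end
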